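(* Let $(A,\mathfrak m)$ be a local Prüfer ring, $B$ a ring, $f : A \to B$ a ring homomorphism and $J$ a proper ideal of $B$ with $J \subseteq \mathrm{Rad}(B)$. Assume that $J \subseteq f(A)$, $f^{-1}(J) \subseteq Z(A)$ and $f(\mathrm{Reg}(A)) \subseteq \mathrm{Reg}(B)$. Then $Z(A \bowtie^f J) = Z(A) \bowtie^f J$.
   Context: All rings are commutative with identity. For a ring homomorphism $f:A\to B$ and an ideal $J$ of $B$, $A \bowtie^f J := \{(a, f(a)+j) : a \in A, j \in J\}$, a subring of $A\times B$, and for $S\subseteq A$, $S\bowtie^f J := \{(a,f(a)+j): a\in S, j\in J\}$. $Z(R)$ is the set of zero-divisors of $R$, $\mathrm{Reg}(R)=R\setminus Z(R)$, $\mathrm{Rad}(B)$ is the Jacobson radical of $B$. An ideal is regular if it contains a regular element. A ring $R$ is a Prüfer ring if every finitely generated regular ideal of $R$ is invertible. *)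

theory Defs
  imports Main
begin

definition is_ideal :: "'a::comm_ring_1 set \<Rightarrow> bool" where
  "is_ideal I \<longleftrightarrow> 0 \<in> I \<and> (\<forall>x\<in>I. \<forall>y\<in>I. x + y \<in> I) \<and> (\<forall>r. \<forall>x\<in>I. r * x \<in> I)"

definition maximal_ideal :: "'a::comm_ring_1 set \<Rightarrow> bool" where
  "maximal_ideal M \<longleftrightarrow> is_ideal M \<and> M \<noteq> UNIV \<and>
     (\<forall>I. is_ideal I \<and> M \<subseteq> I \<longrightarrow> I = M \<or> I = UNIV)"

definition local_ring_with :: "'a::comm_ring_1 set \<Rightarrow> bool" where
  "local_ring_with m \<longleftrightarrow> maximal_ideal m \<and> (\<forall>M. maximal_ideal M \<longrightarrow> M = m)"

definition jacobson_rad :: "'a::comm_ring_1 set" where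
  "jacobson_rad = \<Inter> {M. maximal_ideal M}"

definition zero_divisors :: "'a::comm_ring_1 set" where
  "zero_divisors = {z. \<exists>y. y \<noteq> 0 \<and> z * y = 0}"

definition regular_elems :: "'a::comm_ring_1 set" where
  "regular_elems = UNIV - zero_divisors"

definition regular_ideal :: "'a::comm_ring_1 set \<Rightarrow> bool" where
  "regular_ideal I \<longleftrightarrow> I \<inter> regular_elems \<noteq> {}"

definition fin_gen_ideal :: "'a::comm_ring_1 set \<Rightarrow> bool" where
  "fin_gen_ideal I \<longleftrightarrow> (\<exists>S. finite S \<and> I = {\<Sum>s\<in>S. c s * s | c. True})"

text \<open>Invertible ideal: I (R:I) = R in the total ring of quotients Q(R).
  Elements of (R:I) are fractions a/s (s regular) with (a/s) I \<subseteq> R, i.e. s divides a*x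
  for all x in I. Writing a finite sum of products of elements of I and of (R:I)
  over a common regular denominator s, the condition 1 \<in> I (R:I) reads as below
  (I (R:I) \<subseteq> R holds automatically).\<close>
definition invertible_ideal :: "'a::comm_ring_1 set \<Rightarrow> bool" where
  "invertible_ideal I \<longleftrightarrow>
     (\<exists>s n (xs :: nat \<Rightarrow> 'a) as. s \<in> regular_elems \<and>
        (\<forall>k<n. xs k \<in> I \<and> (\<forall>x\<in>I. s dvd as k * x)) \<and>
        (\<Sum>k<n. xs k * as k) = s)"

definition pruefer_ring :: "'a::comm_ring_1 itself \<Rightarrow> bool" where
  "pruefer_ring _ \<longleftrightarrow> (\<forall>I::'a set. is_ideal I \<and> fin_gen_ideal I \<and> regular_ideal I \<longrightarrow> invertible_ideal I)"

definition ring_hom :: "('a::comm_ring_1 \<Rightarrow> 'b::comm_ring_1) \<Rightarrow> bool" where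
  "ring_hom f \<longleftrightarrow> f 1 = 1 \<and> (\<forall>x y. f (x + y) = f x + f y) \<and> (\<forall>x y. f (x * y) = f x * f y)"

definition amalg :: "'a set \<Rightarrow> ('a \<Rightarrow> 'b::plus) \<Rightarrow> 'b set \<Rightarrow> ('a \<times> 'b) set" where
  "amalg S f J = {(a, f a + j) | a j. a \<in> S \<and> j \<in> J}"

definition zero_divisors_prod :: "('a::comm_ring_1 \<times> 'b::comm_ring_1) set \<Rightarrow> ('a \<times> 'b) set" where
  "zero_divisors_prod R = {(a, b) \<in> R. \<exists>(c, d) \<in> R. (c, d) \<noteq> (0, 0) \<and> a * c = 0 \<and> b * d = 0}"

end

theory Submission
  imports Defs
begin

text \<open>In a local Pruefer ring every regular element a is comparable under divisibility with
  any b: inverting the ideal (a, b) yields elements u_k, v_k with u_k b = v_k a that generate the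
  unit ideal, so one of them is a unit. If b is moreover a zero-divisor, b cannot divide a, so
  b = a r with r a zero-divisor; then r lies in the maximal ideal and a + b = a (1 + r) is
  regular. For the amalgamation, write j = f a' with a' a zero-divisor: if a is regular then
  f a + j = f (a + a') is regular in B, so (a, f a + j) is not a zero-divisor; conversely a
  zero-divisor a with a c = 0 is annihilated by (c, f c) or by (a' c, 0).\<close>

lemma ideal_zero: "is_ideal I \<Longrightarrow> 0 \<in> I"
  unfolding is_ideal_def by blast

lemma ideal_add: "is_ideal I \<Longrightarrow> x \<in> I \<Longrightarrow> y \<in> I \<Longrightarrow> x + y \<in> I"
  unfolding is_ideal_def by blast

lemma ideal_mult: "is_ideal I \<Longrightarrow> x \<in> I \<Longrightarrow> r * x \<in> I"
  unfolding is_ideal_def by blast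

lemma ideal_uminus: "is_ideal I \<Longrightarrow> x \<in> I \<Longrightarrow> - x \<in> I"
  using ideal_mult[of I x "- 1"] by simp

lemma ideal_diff: "is_ideal I \<Longrightarrow> x \<in> I \<Longrightarrow> y \<in> I \<Longrightarrow> x - y \<in> I"
  using ideal_add[of I x "- y"] ideal_uminus[of I y] by simp

lemma ideal_sum: "is_ideal I \<Longrightarrow> (\<And>k. k < n \<Longrightarrow> g k \<in> I) \<Longrightarrow> (\<Sum>k<(n::nat). g k) \<in> I"
  by (induction n) (auto intro: ideal_zero ideal_add)

lemma ideal_one_eq_UNIV: "is_ideal I \<Longrightarrow> 1 \<in> I \<Longrightarrow> I = UNIV"
  using ideal_mult[of I 1] by auto

definition ideal_span :: "'a::comm_ring_1 set \<Rightarrow> 'a set" where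
  "ideal_span S = {\<Sum>s\<in>S. c s * s | c. True}"

lemma is_ideal_ideal_span: "is_ideal (ideal_span S)"
  unfolding is_ideal_def ideal_span_def
proof (intro conjI ballI allI)
  show "0 \<in> {\<Sum>s\<in>S. c s * s | c. True}"
    by (auto intro: exI[of _ "\<lambda>_. 0"])
next
  fix x y assume "x \<in> {\<Sum>s\<in>S. c s * s | c. True}" "y \<in> {\<Sum>s\<in>S. c s * s | c. True}"
  then obtain c d where "x = (\<Sum>s\<in>S. c s * s)" "y = (\<Sum>s\<in>S. d s * s)" by blast
  then have "x + y = (\<Sum>s\<in>S. (c s + d s) * s)"
    by (simp add: sum.distrib distrib_right)
  then show "x + y \<in> {\<Sum>s\<in>S. c s * s | c. True}" by (auto intro!: exI[of _ "\<lambda>s. c s + d s"])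
next
  fix r x assume "x \<in> {\<Sum>s\<in>S. c s * s | c. True}"
  then obtain c where "x = (\<Sum>s\<in>S. c s * s)" by blast
  then have "r * x = (\<Sum>s\<in>S. (r * c s) * s)"
    by (simp add: sum_distrib_left mult.assoc)
  then show "r * x \<in> {\<Sum>s\<in>S. c s * s | c. True}" by (auto intro!: exI[of _ "\<lambda>s. r * c s"])
qed

lemma fin_gen_ideal_span: "finite S \<Longrightarrow> fin_gen_ideal (ideal_span S)"
  unfolding fin_gen_ideal_def ideal_span_def by blast

lemma ideal_span_mem: "finite S \<Longrightarrow> x \<in> S \<Longrightarrow> x \<in> ideal_span S"
proof -
  assume "finite S" "x \<in> S"
  then have "(\<Sum>s\<in>S. (if s = x then 1 else 0) * s) = x"
    by (simp add: if_distrib[of "\<lambda>c. c * _"] sum.delta cong: if_cong)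
  then show "x \<in> ideal_span S"
    unfolding ideal_span_def by (auto intro!: exI[of _ "\<lambda>s. if s = x then 1 else 0"])
qed

lemma ideal_span_pair_elem: "x \<in> ideal_span {a, b} \<Longrightarrow> \<exists>p q. x = p * a + q * b"
  unfolding ideal_span_def by (cases "a = b") (auto, metis add.right_neutral mult_zero_left)

lemma is_ideal_Union_chain:
  assumes "\<C> \<noteq> {}" and ideals: "\<And>X. X \<in> \<C> \<Longrightarrow> is_ideal X"
    and chain: "\<And>X Y. X \<in> \<C> \<Longrightarrow> Y \<in> \<C> \<Longrightarrow> X \<subseteq> Y \<or> Y \<subseteq> X"
  shows "is_ideal (\<Union>\<C>)"
  unfolding is_ideal_def
proof (intro conjI ballI allI)
  show "0 \<in> \<Union>\<C>" using \<open>\<C> \<noteq> {}\<close> ideals ideal_zero by blast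
next
  fix x y assume "x \<in> \<Union>\<C>" "y \<in> \<Union>\<C>"
  then obtain X Y where XY: "X \<in> \<C>" "Y \<in> \<C>" "x \<in> X" "y \<in> Y" by blast
  with chain consider "x \<in> Y" | "y \<in> X" by blast
  then show "x + y \<in> \<Union>\<C>" using XY ideals ideal_add by cases blast+
next
  fix r x assume "x \<in> \<Union>\<C>"
  then show "r * x \<in> \<Union>\<C>" using ideals ideal_mult by blast
qed

lemma proper_ideal_in_maximal_ideal:
  fixes I :: "'a::comm_ring_1 set"
  assumes "is_ideal I" "1 \<notin> I"
  obtains M where "maximal_ideal M" "I \<subseteq> M"
proof -
  define \<A> where "\<A> = {K::'a set. is_ideal K \<and> I \<subseteq> K \<and> 1 \<notin> K}"
  have "I \<in> \<A>" using assms unfolding \<A>_def by blast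
  moreover have "\<Union>\<C> \<in> \<A>" if "\<C> \<noteq> {}" "subset.chain \<A> \<C>" for \<C>
  proof -
    have "\<C> \<subseteq> \<A>" "\<And>X Y. X \<in> \<C> \<Longrightarrow> Y \<in> \<C> \<Longrightarrow> X \<subseteq> Y \<or> Y \<subseteq> X"
      using \<open>subset.chain \<A> \<C>\<close> unfolding subset_chain_def by blast+
    moreover from this have "is_ideal (\<Union>\<C>)"
      using is_ideal_Union_chain[OF \<open>\<C> \<noteq> {}\<close>] unfolding \<A>_def by blast
    ultimately show ?thesis using \<open>\<C> \<noteq> {}\<close> unfolding \<A>_def by blast
  qed
  ultimately obtain M where M: "M \<in> \<A>" and M_max: "\<And>X. X \<in> \<A> \<Longrightarrow> M \<subseteq> X \<Longrightarrow> X = M"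
    using subset_Zorn_nonempty[of \<A>] by blast
  have "maximal_ideal M" unfolding maximal_ideal_def
  proof (intro conjI allI impI)
    show "is_ideal M" "M \<noteq> UNIV" using M unfolding \<A>_def by blast+
  next
    fix K assume "is_ideal K \<and> M \<subseteq> K"
    then show "K = M \<or> K = UNIV"
      using M M_max ideal_one_eq_UNIV unfolding \<A>_def by blast
  qed
  then show thesis using M that unfolding \<A>_def by blast
qed

lemma regular_elems_iff: "x \<in> regular_elems \<longleftrightarrow> (\<forall>y. x * y = 0 \<longrightarrow> y = 0)"
  unfolding regular_elems_def zero_divisors_def by blast

lemma regular_elems_cancel: "s \<in> regular_elems \<Longrightarrow> s * x = s * y \<Longrightarrow> x = y"
  using regular_elems_iff[of s] by (metis eq_iff_diff_eq_0 right_diff_distrib)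

lemma regular_elems_mult: "x \<in> regular_elems \<Longrightarrow> y \<in> regular_elems \<Longrightarrow> x * y \<in> regular_elems"
  unfolding regular_elems_iff by (metis mult.assoc)

lemma unit_regular_elem:
  assumes "x dvd 1" shows "x \<in> regular_elems"
  unfolding regular_elems_iff
proof (intro allI impI)
  fix y assume "x * y = 0"
  obtain w where "1 = x * w" using assms by (rule dvdE)
  then have "y = w * (x * y)" by (metis mult.left_commute mult_1_right)
  then show "y = 0" using \<open>x * y = 0\<close> by simp
qed

lemma zero_divisor_not_unit: "z \<in> zero_divisors \<Longrightarrow> \<not> z dvd 1"
  using unit_regular_elem unfolding regular_elems_def by blast

lemma zero_divisor_mult:
  assumes "z \<in> zero_divisors" shows "c * z \<in> zero_divisors"
proof -
  obtain y where y: "y \<noteq> 0" "z * y = 0" using assms unfolding zero_divisors_def by blast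
  then have "(c * z) * y = 0" by (simp add: mult.assoc)
  then show ?thesis using y(1) unfolding zero_divisors_def by blast
qed

lemma zero_divisor_of_mult_regular:
  "a \<in> regular_elems \<Longrightarrow> a * r \<in> zero_divisors \<Longrightarrow> r \<in> zero_divisors"
  unfolding regular_elems_def zero_divisors_def by (auto simp: mult.assoc)

context
  fixes m :: "'a::comm_ring_1 set"
  assumes local: "local_ring_with m"
begin

lemma local_ring_ideal: "is_ideal m"
  using local unfolding local_ring_with_def maximal_ideal_def by blast

lemma local_ring_one_notin: "1 \<notin> m"
  using local ideal_one_eq_UNIV unfolding local_ring_with_def maximal_ideal_def by blast

lemma local_ring_nonunit_mem: "\<not> x dvd 1 \<Longrightarrow> x \<in> m"
proof -
  assume "\<not> x dvd 1"
  then have "1 \<notin> ideal_span {x}"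
    unfolding ideal_span_def by (auto simp: mult.commute dvd_def)
  then obtain M where "maximal_ideal M" "ideal_span {x} \<subseteq> M"
    using proper_ideal_in_maximal_ideal is_ideal_ideal_span by blast
  moreover have "M = m" using \<open>maximal_ideal M\<close> local unfolding local_ring_with_def by blast
  ultimately show "x \<in> m" using ideal_span_mem[of "{x}" x] by blast
qed

lemma local_ring_zero_divisor_mem: "z \<in> zero_divisors \<Longrightarrow> z \<in> m"
  using local_ring_nonunit_mem zero_divisor_not_unit by blast

lemma local_ring_one_plus_unit: "r \<in> m \<Longrightarrow> (1 + r) dvd 1"
  using local_ring_nonunit_mem ideal_diff[OF local_ring_ideal, of "1 + r" r] local_ring_one_notin
  by auto

end

text \<open>With as_k / s running through the inverse of the ideal (a, b), the witnesses are
  u_k = as_k a / s and v_k = as_k b / s; the regular denominator s is cancelled.\<close>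

lemma pruefer_regular_pair:
  fixes a b :: "'a::comm_ring_1"
  assumes pruefer: "pruefer_ring TYPE('a)" and a: "a \<in> regular_elems"
  obtains n :: nat and u v \<alpha> \<beta> :: "nat \<Rightarrow> 'a"
  where "\<forall>k<n. u k * b = v k * a" and "(\<Sum>k<n. \<alpha> k * u k + \<beta> k * v k) = 1"
proof -
  let ?I = "ideal_span {a, b}"
  have a_I: "a \<in> ?I" and b_I: "b \<in> ?I" by (simp_all add: ideal_span_mem)
  have "regular_ideal ?I" using a a_I unfolding regular_ideal_def by blast
  then have "invertible_ideal ?I"
    using pruefer is_ideal_ideal_span fin_gen_ideal_span[of "{a, b}"]
    unfolding pruefer_ring_def by blast
  then obtain s n and xs as :: "nat \<Rightarrow> 'a" where s: "s \<in> regular_elems"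
    and xs: "\<And>k. k < n \<Longrightarrow> xs k \<in> ?I" and dvd: "\<And>k x. k < n \<Longrightarrow> x \<in> ?I \<Longrightarrow> s dvd as k * x"
    and sum_s: "(\<Sum>k<n. xs k * as k) = s"
    unfolding invertible_ideal_def by blast
  have "\<forall>k. \<exists>p q. k < n \<longrightarrow> xs k = p * a + q * b"
    using xs ideal_span_pair_elem by blast
  then obtain \<alpha> \<beta> where xs_eq: "\<And>k. k < n \<Longrightarrow> xs k = \<alpha> k * a + \<beta> k * b"
    unfolding choice_iff by blast
  have "\<forall>k. \<exists>u v. k < n \<longrightarrow> as k * a = s * u \<and> as k * b = s * v"
    using dvd a_I b_I by (meson dvdE)
  then obtain u v where u: "\<And>k. k < n \<Longrightarrow> as k * a = s * u k"
    and v: "\<And>k. k < n \<Longrightarrow> as k * b = s * v k"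
    unfolding choice_iff by blast
  have "u k * b = v k * a" if k: "k < n" for k
  proof (rule regular_elems_cancel[OF s])
    have "s * (u k * b) = (as k * a) * b" using u[OF k] by (simp add: mult.assoc)
    also have "\<dots> = (as k * b) * a" by (simp add: ac_simps)
    also have "\<dots> = s * (v k * a)" using v[OF k] by (simp add: mult.assoc)
    finally show "s * (u k * b) = s * (v k * a)" .
  qed
  moreover have "(\<Sum>k<n. \<alpha> k * u k + \<beta> k * v k) = 1"
  proof (rule regular_elems_cancel[OF s])
    have "xs k * as k = s * (\<alpha> k * u k + \<beta> k * v k)" if k: "k < n" for k
    proof -
      have "xs k * as k = \<alpha> k * (as k * a) + \<beta> k * (as k * b)"
        using xs_eq[OF k] by (simp add: algebra_simps)
      also have "\<dots> = s * (\<alpha> k * u k + \<beta> k * v k)"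
        using u[OF k] v[OF k] by (simp add: algebra_simps)
      finally show ?thesis .
    qed
    then show "s * (\<Sum>k<n. \<alpha> k * u k + \<beta> k * v k) = s * 1"
      using sum_s by (simp add: sum_distrib_left)
  qed
  ultimately show thesis using that by blast
qed

lemma unit_mult_eq_imp_dvd:
  fixes a b u v :: "'a::comm_ring_1"
  assumes "u dvd 1" and "u * b = v * a"
  shows "a dvd b"
proof -
  obtain w where w: "1 = u * w" using assms(1) by (rule dvdE)
  have "b = w * (u * b)" using w by (metis mult.left_commute mult_1_right)
  also have "\<dots> = (w * v) * a" using assms(2) by (simp add: mult.assoc)
  finally show ?thesis by simp
qed

lemma local_pruefer_regular_dvd_or_dvd:
  fixes a b :: "'a::comm_ring_1" and m :: "'a set"
  assumes local: "local_ring_with m" and pruefer: "pruefer_ring TYPE('a)"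
    and a: "a \<in> regular_elems"
  shows "a dvd b \<or> b dvd a"
proof -
  obtain n and u v \<alpha> \<beta> :: "nat \<Rightarrow> 'a" where uv: "\<forall>k<n. u k * b = v k * a"
    and sum_one: "(\<Sum>k<n. \<alpha> k * u k + \<beta> k * v k) = 1"
    by (rule pruefer_regular_pair[OF pruefer a, of b])
  have m: "is_ideal m" using local_ring_ideal[OF local] .
  have "\<not> (\<forall>k<n. \<alpha> k * u k + \<beta> k * v k \<in> m)"
  proof
    assume "\<forall>k<n. \<alpha> k * u k + \<beta> k * v k \<in> m"
    then have "(\<Sum>k<n. \<alpha> k * u k + \<beta> k * v k) \<in> m"
      by (intro ideal_sum[OF m]) simp
    then show False using sum_one local_ring_one_notin[OF local] by simp
  qed
  then obtain k where k: "k < n" and "\<alpha> k * u k + \<beta> k * v k \<notin> m" by blast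
  then have "u k \<notin> m \<or> v k \<notin> m" using ideal_add[OF m ideal_mult[OF m] ideal_mult[OF m]] by blast
  then have "u k dvd 1 \<or> v k dvd 1" using local_ring_nonunit_mem[OF local] by blast
  then show ?thesis using uv k unit_mult_eq_imp_dvd by metis
qed

lemma local_pruefer_regular_add_zero_divisor:
  fixes a b :: "'a::comm_ring_1" and m :: "'a set"
  assumes local: "local_ring_with m" and pruefer: "pruefer_ring TYPE('a)"
    and a: "a \<in> regular_elems" and b: "b \<in> zero_divisors"
  shows "a + b \<in> regular_elems"
proof -
  have "\<not> b dvd a"
  proof
    assume "b dvd a"
    then obtain c where "a = b * c" by (rule dvdE)
    then have "a \<in> zero_divisors" using zero_divisor_mult[OF b, of c] by (simp add: mult.commute)
    then show False using a unfolding regular_elems_def by blast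
  qed
  then have "a dvd b" using local_pruefer_regular_dvd_or_dvd[OF local pruefer a] by blast
  then obtain r where r: "b = a * r" by (rule dvdE)
  have "r \<in> zero_divisors" using zero_divisor_of_mult_regular[OF a] b r by simp
  then have "(1 + r) dvd 1"
    using local_ring_one_plus_unit[OF local] local_ring_zero_divisor_mem[OF local] by blast
  then have "a * (1 + r) \<in> regular_elems" using regular_elems_mult[OF a] unit_regular_elem by blast
  then show ?thesis using r by (simp add: distrib_left)
qed

lemma ring_hom_zero: "ring_hom f \<Longrightarrow> f 0 = 0"
  unfolding ring_hom_def by (metis add_cancel_right_right add_0)

lemma ring_hom_add: "ring_hom f \<Longrightarrow> f (x + y) = f x + f y"
  unfolding ring_hom_def by blast

lemma ring_hom_mult: "ring_hom f \<Longrightarrow> f (x * y) = f x * f y"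
  unfolding ring_hom_def by blast

lemma mem_amalg_iff:
  fixes f :: "'a \<Rightarrow> 'b::ab_group_add"
  shows "(a, b) \<in> amalg S f J \<longleftrightarrow> a \<in> S \<and> b - f a \<in> J"
  unfolding amalg_def by (auto intro!: exI[of _ "b - f a"])

lemma amalg_snd_eq_image:
  assumes hom: "ring_hom f" and "J \<subseteq> range f" and j: "b - f a \<in> J"
  obtains a' where "f a' \<in> J" and "b = f (a + a')"
proof -
  obtain a' where a': "b - f a = f a'" using assms(2) j by blast
  then have "f a' \<in> J" using j by simp
  moreover have "b = f (a + a')" using a' ring_hom_add[OF hom] by (metis diff_add_cancel add.commute)
  ultimately show thesis by (rule that)
qed

lemma zero_divisors_prod_amalg_subset:
  fixes f :: "'a::comm_ring_1 \<Rightarrow> 'b::comm_ring_1"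
  assumes hom: "ring_hom f" and J_range: "J \<subseteq> range f" and J_preimage: "f -` J \<subseteq> zero_divisors"
    and f_regular: "f ` regular_elems \<subseteq> regular_elems"
    and add_regular: "\<And>a b :: 'a. a \<in> regular_elems \<Longrightarrow> b \<in> zero_divisors \<Longrightarrow> a + b \<in> regular_elems"
  shows "zero_divisors_prod (amalg UNIV f J) \<subseteq> amalg zero_divisors f J"
proof (clarify)
  fix a b assume ab: "(a, b) \<in> zero_divisors_prod (amalg UNIV f J)"
  then have j: "b - f a \<in> J" unfolding zero_divisors_prod_def mem_amalg_iff by blast
  obtain c d where cd: "(c, d) \<noteq> (0, 0)" "a * c = 0" "b * d = 0"
    using ab unfolding zero_divisors_prod_def by blast
  have "a \<in> zero_divisors"
  proof (rule ccontr)
    assume "a \<notin> zero_divisors"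
    then have a: "a \<in> regular_elems" unfolding regular_elems_def by blast
    then have "d \<noteq> 0" using cd regular_elems_iff by blast
    obtain a' where "f a' \<in> J" and b: "b = f (a + a')"
      using amalg_snd_eq_image[OF hom J_range j] .
    then have "a' \<in> zero_divisors" using J_preimage by auto
    then have "b \<in> regular_elems" unfolding b using add_regular[OF a] f_regular by blast
    then show False using \<open>d \<noteq> 0\<close> cd(3) regular_elems_iff by blast
  qed
  then show "(a, b) \<in> amalg zero_divisors f J" using j unfolding mem_amalg_iff by blast
qed

lemma amalg_zero_divisors_subset:
  assumes hom: "ring_hom f" and J: "is_ideal J" and J_range: "J \<subseteq> range f"
  shows "amalg zero_divisors f J \<subseteq> zero_divisors_prod (amalg UNIV f J)"
proof (clarify)
  fix a b assume "(a, b) \<in> amalg zero_divisors f J"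
  then have a: "a \<in> zero_divisors" and j: "b - f a \<in> J" unfolding mem_amalg_iff by blast+
  obtain c where c: "c \<noteq> 0" "a * c = 0" using a unfolding zero_divisors_def by blast
  obtain a' where a': "f a' \<in> J" and b: "b = f (a + a')"
    using amalg_snd_eq_image[OF hom J_range j] .
  have ab: "(a, b) \<in> amalg UNIV f J" using j unfolding mem_amalg_iff by blast
  show "(a, b) \<in> zero_divisors_prod (amalg UNIV f J)"
  proof (cases "a' * c = 0")
    case True
    have "(c, f c) \<in> amalg UNIV f J" using ideal_zero[OF J] unfolding mem_amalg_iff by simp
    moreover have "b * f c = 0"
      using True c(2) b ring_hom_mult[OF hom] ring_hom_zero[OF hom] by (metis distrib_right add_0)
    ultimately show ?thesis using ab c unfolding zero_divisors_prod_def by blast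
  next
    case False
    have "f (a' * c) \<in> J"
      using ring_hom_mult[OF hom] ideal_mult[OF J a'] by (metis mult.commute)
    then have "(a' * c, 0) \<in> amalg UNIV f J" using ideal_uminus[OF J] unfolding mem_amalg_iff by simp
    moreover have "a * (a' * c) = 0" using c(2) by (metis mult.left_commute mult_zero_right)
    ultimately show ?thesis using ab False unfolding zero_divisors_prod_def by force
  qed
qed

theorem lemma2p6:
  fixes f :: "'a::comm_ring_1 \<Rightarrow> 'b::comm_ring_1"
    and m :: "'a set" and J :: "'b set"
  assumes "local_ring_with m"
    and "pruefer_ring TYPE('a)"
    and "ring_hom f"
    and "is_ideal J" and "J \<noteq> UNIV"
    and "J \<subseteq> jacobson_rad"
    and "J \<subseteq> range f"
    and "f -` J \<subseteq> zero_divisors"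
    and "f ` regular_elems \<subseteq> regular_elems"
  shows "zero_divisors_prod (amalg UNIV f J) = amalg zero_divisors f J"
proof
  show "zero_divisors_prod (amalg UNIV f J) \<subseteq> amalg zero_divisors f J"
    using zero_divisors_prod_amalg_subset[OF assms(3,7-9)]
      local_pruefer_regular_add_zero_divisor[OF assms(1,2)] by blast
  show "amalg zero_divisors f J \<subseteq> zero_divisors_prod (amalg UNIV f J)"
    using amalg_zero_divisors_subset[OF assms(3,4,7)] .
qed

end
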